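(* Let $u$ be a positive integer, $\mathcal F$ and $\mathcal C$ finite sets, and let $x_{i,j}\ge0$ ($i\in\mathcal F,j\in\mathcal C$) and $y_i\ge0$ ($i\in\mathcal F$) satisfy $\sum_{i\in\mathcal F}x_{i,j}=1$ for every $j\in\mathcal C$. Let $\mathcal B\subseteq\mathcal F$ and suppose that $x_{\mathcal B,\mathcal J}\le f(|\mathcal J|,y_{\mathcal B})$ for every $\mathcal J\subseteq\mathcal C$. Let $y'_{\mathcal B}=\frac1u\sum_{j\in\mathcal C}x_{\mathcal B,j}$ and suppose $y'_{\mathcal B}\ge\lfloor y_{\mathcal B}\rfloor$. Then $$\sum_{j\in\mathcal C}x_{\mathcal B,j}(1-x_{\mathcal B,j})\ \ge\ u\,\big(y'_{\mathcal B}-\lfloor y'_{\mathcal B}\rfloor\big)\big(\lceil y_{\mathcal B}\rceil-y_{\mathcal B}\big).$$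
   Context: Notation: $y_{\mathcal B}=\sum_{i\in\mathcal B}y_i$, $x_{\mathcal B,j}=\sum_{i\in\mathcal B}x_{i,j}$, $x_{\mathcal B,\mathcal J}=\sum_{i\in\mathcal B,j\in\mathcal J}x_{i,j}$. The function $f:\mathbb Z_{\ge0}\times\mathbb R_{\ge0}\to\mathbb R$ is defined by $f(p,q)=qu$ if $q\le\lfloor p/u\rfloor$; $f(p,q)=u\lfloor p/u\rfloor+u(p/u-\lfloor p/u\rfloor)(q-\lfloor p/u\rfloor)$ if $\lfloor p/u\rfloor<q<\lceil p/u\rceil$; $f(p,q)=p$ if $q\ge\lceil p/u\rceil$. *)

theory Defs
  imports "HOL-Analysis.Analysis"
begin

definition capf :: "nat \<Rightarrow> nat \<Rightarrow> real \<Rightarrow> real" where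
  "capf u p q =
     (let a = real_of_int \<lfloor>real p / real u\<rfloor>; b = real_of_int \<lceil>real p / real u\<rceil> in
      if q \<le> a then q * real u
      else if q < b then real u * a + real u * (real p / real u - a) * (q - a)
      else real p)"

end

theory Submission
  imports Defs
begin

text \<open>Write \<open>a j\<close> for \<open>x\<^sub>B\<^sub>,\<^sub>j\<close>, \<open>S = \<Sum>\<^sub>j a j\<close>, \<open>k = \<lfloor>y\<^sub>B\<rfloor>\<close> and \<open>d = \<lceil>y\<^sub>B\<rceil> - y\<^sub>B\<close>.
  Comparing the pieces of the piecewise linear capacity function with the caps
  \<open>f(p,q) \<le> p\<close> and \<open>f(p,q) \<le> q u\<close> gives \<open>f(p, y\<^sub>B) \<le> (1 - d) p + d u k\<close>.
  Let \<open>J\<close> be the set of \<open>j\<close> with \<open>a j > 1 - d\<close>. On \<open>[0,1]\<close>, \<open>a (1 - a)\<close> dominates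
  \<open>(1 - d)(1 - a)\<close> above the threshold \<open>1 - d\<close> and \<open>d a\<close> below it; summing, and
  bounding \<open>x\<^sub>B\<^sub>,\<^sub>J \<le> f(|J|, y\<^sub>B)\<close>, yields \<open>\<Sum>\<^sub>j a j (1 - a j) \<ge> d (S - u k)\<close>.
  Finally \<open>S/u \<ge> k\<close> forces \<open>\<lfloor>S/u\<rfloor> \<ge> k\<close>, so \<open>S - u k \<ge> u (S/u - \<lfloor>S/u\<rfloor>)\<close>.\<close>

lemma capf_le_card:
  assumes "u > 0"
  shows "capf u p q \<le> real p"
proof -
  define a where "a = real_of_int \<lfloor>real p / real u\<rfloor>"
  define b where "b = real_of_int \<lceil>real p / real u\<rceil>"
  have u: "real u > 0" using assms by simp
  have pa: "a * real u \<le> real p" unfolding a_def using u by (metis floor_divide_lower)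
  have rest: "real u * (real p / real u - a) = real p - real u * a" using u by (simp add: field_simps)
  have "q \<le> a \<Longrightarrow> q * real u \<le> real p"
    using pa u by (meson mult_right_mono order_trans less_imp_le)
  moreover have "real u * (real p / real u - a) * (q - a) \<le> real p - real u * a" if "q < b"
  proof -
    have "q - a \<le> 1" using that unfolding a_def b_def by (simp add: ceiling_altdef split: if_splits)
    moreover have "0 \<le> real u * (real p / real u - a)" using rest pa by (simp add: mult.commute)
    ultimately show ?thesis using rest by (metis mult_left_le)
  qed
  ultimately show ?thesis unfolding capf_def Let_def a_def[symmetric] b_def[symmetric] by auto
qed

lemma capf_le_mult:
  assumes "u > 0"
  shows "capf u p q \<le> q * real u"
proof -
  define a where "a = real_of_int \<lfloor>real p / real u\<rfloor>"
  define b where "b = real_of_int \<lceil>real p / real u\<rceil>"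
  have u: "real u > 0" using assms by simp
  have "real u * (real p / real u - a) * (q - a) \<le> real u * 1 * (q - a)" if "a < q"
    using that u unfolding a_def by (intro mult_left_mono mult_right_mono) linarith+
  moreover have "b \<le> q \<Longrightarrow> real p \<le> q * real u"
    using u unfolding b_def by (metis ceiling_correct pos_divide_le_eq order_trans)
  ultimately show ?thesis unfolding capf_def Let_def a_def[symmetric] b_def[symmetric]
    by (auto simp: algebra_simps)
qed

lemma capf_interpolation_branch:
  fixes k :: int and q :: real
  assumes "u > 0" "real u * k < real p" "real p < real u * (k + 1)" "k < q" "q < k + 1"
  shows "capf u p q = real u * k + (real p - real u * k) * (q - k)"
proof -
  have u: "real u > 0" using assms(1) by simp
  have "k < real p / real u" "real p / real u < k + 1"
    using assms(2,3) u by (auto simp: field_simps)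
  then have "\<lfloor>real p / real u\<rfloor> = k" "\<lceil>real p / real u\<rceil> = k + 1"
    by (simp_all add: floor_eq_iff ceiling_eq_iff)
  moreover have "real u * (real p / real u - k) = real p - real u * k" using u by (simp add: field_simps)
  ultimately show ?thesis unfolding capf_def Let_def using assms(4,5) by simp
qed

lemma capf_le_interpolation:
  fixes Y :: real
  assumes "u > 0"
  defines "d \<equiv> real_of_int \<lceil>Y\<rceil> - Y"
  shows "capf u p Y \<le> (1 - d) * real p + d * real u * \<lfloor>Y\<rfloor>"
proof (cases "Y = \<lfloor>Y\<rfloor>")
  case True
  then have "d = 0" unfolding d_def by (metis ceiling_of_int diff_self)
  then show ?thesis using capf_le_card[OF assms(1)] by simp
next
  case False
  define k where "k = \<lfloor>Y\<rfloor>"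
  have "\<lceil>Y\<rceil> = k + 1" unfolding k_def using False ceiling_altdef[of Y] by simp
  then have Y: "Y = k + 1 - d" unfolding d_def by simp
  have "k < Y" "Y < k + 1" using False unfolding k_def by linarith+
  then have d: "0 < d" "d < 1" using Y by simp_all
  consider "real p \<le> real u * k" | "real u * (k + 1) \<le> real p"
    | "real u * k < real p" "real p < real u * (k + 1)" by linarith
  then have "capf u p Y \<le> (1 - d) * real p + d * real u * k"
  proof cases
    case 1
    then have "d * real p \<le> d * (real u * k)" using d by simp
    then show ?thesis using capf_le_card[OF assms(1), of p Y] by argo
  next
    case 2
    then have "(1 - d) * (real u * (k + 1)) \<le> (1 - d) * real p" using d by simp
    moreover have "capf u p Y \<le> (k + 1 - d) * real u" using capf_le_mult[OF assms(1), of p Y] Y by simp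
    ultimately show ?thesis by (simp add: algebra_simps)
  next
    case 3
    then have "capf u p Y = real u * k + (real p - real u * k) * (1 - d)"
      using capf_interpolation_branch[OF assms(1) 3 \<open>k < Y\<close> \<open>Y < k + 1\<close>] Y by simp
    then show ?thesis by (simp add: algebra_simps)
  qed
  then show ?thesis unfolding k_def .
qed

lemma mult_one_minus_ge_threshold:
  fixes a t :: real
  assumes "0 \<le> a" "a \<le> 1"
  shows "a * (1 - a) \<ge> (if a > t then t * (1 - a) else (1 - t) * a)"
proof (cases "a > t")
  case True
  then have "0 \<le> (1 - a) * (a - t)" using assms by simp
  then show ?thesis using True by (simp add: algebra_simps)
next
  case False
  then have "0 \<le> a * (t - a)" using assms by simp
  then show ?thesis using False by (simp add: algebra_simps)
qed

lemma sum_mult_one_minus_ge_threshold: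
  fixes a :: "'c \<Rightarrow> real" and t :: real
  assumes "finite C" "\<And>j. j \<in> C \<Longrightarrow> 0 \<le> a j \<and> a j \<le> 1"
  defines "J \<equiv> {j \<in> C. a j > t}"
  shows "(\<Sum>j\<in>C. a j * (1 - a j))
          \<ge> t * (real (card J) - sum a J) + (1 - t) * (sum a C - sum a J)"
proof -
  have JC: "J \<subseteq> C" unfolding J_def by auto
  have "t * (real (card J) - sum a J) + (1 - t) * (sum a C - sum a J)
      = (\<Sum>j\<in>J. t * (1 - a j)) + (\<Sum>j\<in>C - J. (1 - t) * a j)"
    using sum.subset_diff[OF JC assms(1), of a]
    by (simp add: sum_distrib_left[symmetric] sum_subtractf)
  also have "\<dots> = (\<Sum>j\<in>C. if j \<in> J then t * (1 - a j) else (1 - t) * a j)"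
    using sum.If_cases[OF assms(1), of "\<lambda>j. j \<in> J" "\<lambda>j. t * (1 - a j)" "\<lambda>j. (1 - t) * a j"] JC
    by (simp add: Int_absorb1 Diff_eq[symmetric])
  also have "\<dots> \<le> (\<Sum>j\<in>C. a j * (1 - a j))"
    using mult_one_minus_ge_threshold assms(2) unfolding J_def by (intro sum_mono) auto
  finally show ?thesis .
qed

theorem lemma3:
  fixes u :: nat and F :: "'f set" and C :: "'c set"
    and x :: "'f \<Rightarrow> 'c \<Rightarrow> real" and y :: "'f \<Rightarrow> real" and B :: "'f set"
  assumes "u > 0"
    and "finite F" and "finite C"
    and "\<And>i j. i \<in> F \<Longrightarrow> j \<in> C \<Longrightarrow> x i j \<ge> 0"
    and "\<And>i. i \<in> F \<Longrightarrow> y i \<ge> 0"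
    and "\<And>j. j \<in> C \<Longrightarrow> (\<Sum>i\<in>F. x i j) = 1"
    and "B \<subseteq> F"
    and "\<And>J. J \<subseteq> C \<Longrightarrow> (\<Sum>i\<in>B. \<Sum>j\<in>J. x i j) \<le> capf u (card J) (\<Sum>i\<in>B. y i)"
    and "(1 / real u) * (\<Sum>j\<in>C. \<Sum>i\<in>B. x i j) \<ge> real_of_int \<lfloor>\<Sum>i\<in>B. y i\<rfloor>"
  shows "(\<Sum>j\<in>C. (\<Sum>i\<in>B. x i j) * (1 - (\<Sum>i\<in>B. x i j)))
          \<ge> real u * ((1 / real u) * (\<Sum>j\<in>C. \<Sum>i\<in>B. x i j)
                        - real_of_int \<lfloor>(1 / real u) * (\<Sum>j\<in>C. \<Sum>i\<in>B. x i j)\<rfloor>)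
                   * (real_of_int \<lceil>\<Sum>i\<in>B. y i\<rceil> - (\<Sum>i\<in>B. y i))"
proof -
  define Y where "Y = (\<Sum>i\<in>B. y i)"
  define a where "a j = (\<Sum>i\<in>B. x i j)" for j
  define S where "S = sum a C"
  define d where "d = real_of_int \<lceil>Y\<rceil> - Y"
  define J where "J = {j \<in> C. a j > 1 - d}"
  have "0 \<le> a j \<and> a j \<le> 1" if "j \<in> C" for j
    using sum_mono2[OF assms(2,7), of "\<lambda>i. x i j"] assms(4,6,7) that
    unfolding a_def by (auto intro!: sum_nonneg)
  then have "(\<Sum>j\<in>C. a j * (1 - a j)) \<ge> (1 - d) * (real (card J) - sum a J) + d * (S - sum a J)"
    using sum_mult_one_minus_ge_threshold[OF assms(3), of a "1 - d"] unfolding J_def S_def by simp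
  moreover have "sum a J \<le> (1 - d) * real (card J) + d * real u * \<lfloor>Y\<rfloor>"
    using assms(8)[of J] capf_le_interpolation[OF assms(1), of "card J" Y]
    unfolding J_def a_def Y_def d_def by (simp add: sum.swap[of _ B])
  ultimately have lower: "d * (S - real u * \<lfloor>Y\<rfloor>) \<le> (\<Sum>j\<in>C. a j * (1 - a j))"
    by (simp add: algebra_simps)
  have floor_le: "\<lfloor>Y\<rfloor> \<le> \<lfloor>S / real u\<rfloor>" and d_nonneg: "0 \<le> d"
    using assms(9) unfolding S_def a_def Y_def d_def by (simp_all add: le_floor_iff sum.swap[of _ C])
  have "real u * (S / real u - \<lfloor>S / real u\<rfloor>) * d = d * (S - real u * \<lfloor>S / real u\<rfloor>)"
    using assms(1) by (simp add: field_simps)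
  also have "\<dots> \<le> d * (S - real u * \<lfloor>Y\<rfloor>)"
    using floor_le d_nonneg by (simp add: mult_left_mono)
  finally show ?thesis using lower unfolding a_def S_def Y_def d_def by simp
qed

end
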